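(* Let $(X,\mathcal U)$ be a point-rotund quasi-uniform space. Then the following are equivalent: (1) $(X,\mathcal U)$ is uniformly semiregular; (2) $(X,\mathcal U)$ is uniformly regular; (3) $(X,\mathcal U)$ is uniformly completely regular. If moreover $(X,\mathcal U)$ is rotund, then (1)–(3) are equivalent to each of: (4) $\mathcal U$ is generated by a family of right-continuous premetrics; (5) $\mathcal U$ is generated by a family $\mathcal D$ of right-continuous and $\overline{\mathsf{dist}}$-continuous quasi-pseudometrics with $|\mathcal D|\le\chi(\mathcal U)$.
   Context: Entourages on $X$ are subsets of $X\times X$ containing the diagonal; $U\circ V=\{(x,z):\exists y\,((x,y)\in U,(y,z)\in V)\}$, $B(x;U)=\{y:(x,y)\in U\}$, $B(A;U)=\bigcup_{a\in A}B(a;U)$. A quasi-uniformity $\mathcal U$ on $X$ is a family of entourages closed under supersets, with any two members containing a common member, and such that each $U\in\mathcal U$ contains $V\circ V$ for some $V\in\mathcal U$. All topological notions refer to the topology $\tau_{\mathcal U}$ ($W$ open iff each $x\in W$ has $B(x;U)\subset W$ for some $U\in\mathcal U$); $\overline S$ is closure, $\overline S^\circ$ interior of closure. A base $\mathcal B\subset\mathcal U$ (each member of $\mathcal U$ contains a member of $\mathcal B$) is multiplicative if closed under $\circ$; point-rotund if $\overline{B(x;V)}\subset\overline{B(x;V\circ U)}^\circ$ for all $x$ and $U,V\in\mathcal B$; rotund if $B(\overline A;U)\subset\overline{B(A;W\circ U)}$ for all $A\subset X$, $U,W\in\mathcal B$. $(X,\mathcal U)$ is point-rotund (rotund) if $\mathcal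 U$ has a point-rotund (rotund) multiplicative base. $\chi(\mathcal U)$ is the least cardinality of a base of $\mathcal U$. A premetric is $d:X\times X\to[0,\infty)$ with $d(x,x)=0$; a quasi-pseudometric also satisfies the triangle inequality. $[d]_{<\varepsilon}=\{(x,y):d(x,y)<\varepsilon\}$, $B_d(x,\varepsilon)=\{y:d(x,y)<\varepsilon\}$, $B_d(A,\varepsilon)=\bigcup_{a\in A}B_d(a,\varepsilon)$. $d$ is $\mathcal U$-uniform if $[d]_{<\varepsilon}\in\mathcal U$ for all $\varepsilon>0$; right-continuous if $y\mapsto d(x,y)$ is continuous for each $x$; $\overline{\mathsf{dist}}$-continuous if for every non-empty $A\subset X$ the function $x\mapsto\inf\{\varepsilon>0:x\in\overline{B_d(A,\varepsilon)}\}$ is continuous. A family $\mathcal D$ of premetrics generates $\mathcal U$ if $\{[d]_{<\varepsilon}:d\in\mathcal D,\varepsilon>0\}$ is a subbase of $\mathcal U$ (finite intersections form a base). $(X,\mathcal U)$ is uniformly regular if for every $U\in\mathcal U$ there is $V\in\mathcal U$ with $\overline{B(x;V)}\subset B(x;U)$ for all $x$; uniformly semiregular if for every $U\in\mathcal U$ there is $V\in\mathcal U$ with $\overline{B(x;V)}^\circ\subset B(x;U)$ for all $x$; uniformly completely regular if for every $U\in\mathcal U$ there is a $\mathcal U$-uniform right-continuous premetric $d:X\times X\to[0,1]$ with $B_d(x,1)\subset B(x;U)$ for all $x$. *)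

theory Defs
  imports "HOL-Analysis.Analysis" "HOL-Library.Equipollence"
begin

text \<open>The underlying set X is the universe of the type 'a. Entourages are relations
  ('a \<times> 'a) set; U \<circ> V of the paper is the relational composition U O V;
  B(x;U) = U `` {x}; B(A;U) = U `` A.\<close>

definition quasi_uniformity :: "('a \<times> 'a) set set \<Rightarrow> bool" where
  "quasi_uniformity \<U> \<longleftrightarrow>
     \<U> \<noteq> {} \<and>
     (\<forall>U\<in>\<U>. Id \<subseteq> U) \<and>
     (\<forall>U\<in>\<U>. \<forall>V. U \<subseteq> V \<longrightarrow> V \<in> \<U>) \<and>
     (\<forall>U\<in>\<U>. \<forall>V\<in>\<U>. \<exists>W\<in>\<U>. W \<subseteq> U \<inter> V) \<and>
     (\<forall>U\<in>\<U>. \<exists>V\<in>\<U>. V O V \<subseteq> U)"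

definition qu_topology :: "('a \<times> 'a) set set \<Rightarrow> 'a topology" where
  "qu_topology \<U> = topology (\<lambda>W. \<forall>x\<in>W. \<exists>U\<in>\<U>. U `` {x} \<subseteq> W)"

definition is_base :: "('a \<times> 'a) set set \<Rightarrow> ('a \<times> 'a) set set \<Rightarrow> bool" where
  "is_base \<U> \<B> \<longleftrightarrow> \<B> \<subseteq> \<U> \<and> (\<forall>U\<in>\<U>. \<exists>B\<in>\<B>. B \<subseteq> U)"

definition multiplicative :: "('a \<times> 'a) set set \<Rightarrow> bool" where
  "multiplicative \<B> \<longleftrightarrow> (\<forall>U\<in>\<B>. \<forall>V\<in>\<B>. U O V \<in> \<B>)"

definition point_rotund_base :: "('a \<times> 'a) set set \<Rightarrow> ('a \<times> 'a) set set \<Rightarrow> bool" where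
  "point_rotund_base \<U> \<B> \<longleftrightarrow>
     (\<forall>x. \<forall>U\<in>\<B>. \<forall>V\<in>\<B>.
        qu_topology \<U> closure_of (V `` {x}) \<subseteq>
        qu_topology \<U> interior_of (qu_topology \<U> closure_of ((V O U) `` {x})))"

definition rotund_base :: "('a \<times> 'a) set set \<Rightarrow> ('a \<times> 'a) set set \<Rightarrow> bool" where
  "rotund_base \<U> \<B> \<longleftrightarrow>
     (\<forall>A. \<forall>U\<in>\<B>. \<forall>W\<in>\<B>.
        U `` (qu_topology \<U> closure_of A) \<subseteq> qu_topology \<U> closure_of ((W O U) `` A))"

definition point_rotund :: "('a \<times> 'a) set set \<Rightarrow> bool" where
  "point_rotund \<U> \<longleftrightarrow> (\<exists>\<B>. is_base \<U> \<B> \<and> multiplicative \<B> \<and> point_rotund_base \<U> \<B>)"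

definition rotund :: "('a \<times> 'a) set set \<Rightarrow> bool" where
  "rotund \<U> \<longleftrightarrow> (\<exists>\<B>. is_base \<U> \<B> \<and> multiplicative \<B> \<and> rotund_base \<U> \<B>)"

definition premetric :: "('a \<Rightarrow> 'a \<Rightarrow> real) \<Rightarrow> bool" where
  "premetric d \<longleftrightarrow> (\<forall>x y. 0 \<le> d x y) \<and> (\<forall>x. d x x = 0)"

definition quasi_pseudometric :: "('a \<Rightarrow> 'a \<Rightarrow> real) \<Rightarrow> bool" where
  "quasi_pseudometric d \<longleftrightarrow> premetric d \<and> (\<forall>x y z. d x z \<le> d x y + d y z)"

definition entourage_lt :: "('a \<Rightarrow> 'a \<Rightarrow> real) \<Rightarrow> real \<Rightarrow> ('a \<times> 'a) set" where
  "entourage_lt d \<epsilon> = {(x, y). d x y < \<epsilon>}"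

definition uniform_premetric :: "('a \<times> 'a) set set \<Rightarrow> ('a \<Rightarrow> 'a \<Rightarrow> real) \<Rightarrow> bool" where
  "uniform_premetric \<U> d \<longleftrightarrow> (\<forall>\<epsilon>>0. entourage_lt d \<epsilon> \<in> \<U>)"

definition right_continuous :: "('a \<times> 'a) set set \<Rightarrow> ('a \<Rightarrow> 'a \<Rightarrow> real) \<Rightarrow> bool" where
  "right_continuous \<U> d \<longleftrightarrow> (\<forall>x. continuous_map (qu_topology \<U>) euclideanreal (d x))"

definition closure_dist :: "('a \<times> 'a) set set \<Rightarrow> ('a \<Rightarrow> 'a \<Rightarrow> real) \<Rightarrow> 'a set \<Rightarrow> 'a \<Rightarrow> real" where
  "closure_dist \<U> d A x =
     Inf {\<epsilon>. \<epsilon> > 0 \<and> x \<in> qu_topology \<U> closure_of (entourage_lt d \<epsilon> `` A)}"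

definition closure_dist_continuous :: "('a \<times> 'a) set set \<Rightarrow> ('a \<Rightarrow> 'a \<Rightarrow> real) \<Rightarrow> bool" where
  "closure_dist_continuous \<U> d \<longleftrightarrow>
     (\<forall>A. A \<noteq> {} \<longrightarrow> continuous_map (qu_topology \<U>) euclideanreal (closure_dist \<U> d A))"

definition generates :: "('a \<Rightarrow> 'a \<Rightarrow> real) set \<Rightarrow> ('a \<times> 'a) set set \<Rightarrow> bool" where
  "generates \<D> \<U> \<longleftrightarrow>
     is_base \<U> {\<Inter>\<F> | \<F>. finite \<F> \<and>
                  \<F> \<subseteq> {entourage_lt d \<epsilon> | d \<epsilon>. d \<in> \<D> \<and> \<epsilon> > 0}}"

definition uniformly_regular :: "('a \<times> 'a) set set \<Rightarrow> bool" where
  "uniformly_regular \<U> \<longleftrightarrow>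
     (\<forall>U\<in>\<U>. \<exists>V\<in>\<U>. \<forall>x. qu_topology \<U> closure_of (V `` {x}) \<subseteq> U `` {x})"

definition uniformly_semiregular :: "('a \<times> 'a) set set \<Rightarrow> bool" where
  "uniformly_semiregular \<U> \<longleftrightarrow>
     (\<forall>U\<in>\<U>. \<exists>V\<in>\<U>. \<forall>x.
        qu_topology \<U> interior_of (qu_topology \<U> closure_of (V `` {x})) \<subseteq> U `` {x})"

definition uniformly_completely_regular :: "('a \<times> 'a) set set \<Rightarrow> bool" where
  "uniformly_completely_regular \<U> \<longleftrightarrow>
     (\<forall>U\<in>\<U>. \<exists>d. premetric d \<and> (\<forall>x y. d x y \<le> 1) \<and> uniform_premetric \<U> d \<and>
        right_continuous \<U> d \<and> (\<forall>x. {y. d x y < 1} \<subseteq> U `` {x}))"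

text \<open>|\<D>| \<le> \<chi>(\<U>): \<chi>(\<U>) is the least cardinality of a base, so this says
  |\<D>| \<le> |\<B>| for every base \<B> of \<U>.\<close>
definition card_le_chi :: "'b set \<Rightarrow> ('a \<times> 'a) set set \<Rightarrow> bool" where
  "card_le_chi \<D> \<U> \<longleftrightarrow> (\<forall>\<B>. is_base \<U> \<B> \<longrightarrow> \<D> \<lesssim> \<B>)"

end

theory Submission
  imports Defs
begin

text \<open>Point-rotundity lets the closure of a small ball be swallowed by the interior of the
  closure of a slightly larger ball; applied inside a semiregularity entourage this gives
  regularity. Conversely, given U, regularity provides an entourage W 0 whose closed balls lie
  in U, and a multiplicative base provides a chain with W (k + 1) O W (k + 1) \<subseteq> W k.
  Composing the W k along binary expansions attaches to each dyadic r in (0, 1) an entourage,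
  increasing in r, and Urysohn's construction yields gauge z y \<in> [0, 1], vanishing on the
  diagonal and below 1 only in the closed W 0-ball around z. Point-rotundity makes gauge z
  continuous, whence uniform complete regularity. Under rotundity a W-step moves every gauge z
  by at most a dyadic amount, so the supremum over z of the positive part of
  gauge z y - gauge z x is a uniform right-continuous quasi-pseudometric with continuous
  closure distances; one for each member of a base of least cardinality generates the
  quasi-uniformity. Finally, sublevel sets of right-continuous premetrics are closed, so any
  generating family of them yields regularity.\<close>

section \<open>Quasi-uniform spaces and their topology\<close>

lemma quasi_uniformity_nonempty: "quasi_uniformity \<U> \<Longrightarrow> \<U> \<noteq> {}"
  unfolding quasi_uniformity_def by blast

lemma quasi_uniformity_Id_subset: "quasi_uniformity \<U> \<Longrightarrow> U \<in> \<U> \<Longrightarrow> Id \<subseteq> U"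
  unfolding quasi_uniformity_def by blast

lemma quasi_uniformity_mono: "quasi_uniformity \<U> \<Longrightarrow> U \<in> \<U> \<Longrightarrow> U \<subseteq> V \<Longrightarrow> V \<in> \<U>"
  unfolding quasi_uniformity_def by blast

lemma quasi_uniformity_half: "quasi_uniformity \<U> \<Longrightarrow> U \<in> \<U> \<Longrightarrow> \<exists>V\<in>\<U>. V O V \<subseteq> U"
  unfolding quasi_uniformity_def by blast

lemma quasi_uniformity_Int: "quasi_uniformity \<U> \<Longrightarrow> U \<in> \<U> \<Longrightarrow> V \<in> \<U> \<Longrightarrow> U \<inter> V \<in> \<U>"
  unfolding quasi_uniformity_def by (meson le_infE subset_refl)

lemma quasi_uniformity_Inter:
  assumes qu: "quasi_uniformity \<U>"
  shows "finite F \<Longrightarrow> F \<subseteq> \<U> \<Longrightarrow> \<Inter>F \<in> \<U>"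
proof (induction F rule: finite_induct)
  case empty
  then show ?case
    using quasi_uniformity_nonempty[OF qu] quasi_uniformity_mono[OF qu] by blast
next
  case (insert S F)
  then show ?case using quasi_uniformity_Int[OF qu] by simp
qed

lemma is_base_half:
  assumes "quasi_uniformity \<U>" "is_base \<U> \<B>" "U \<in> \<U>"
  shows "\<exists>V\<in>\<B>. V O V \<subseteq> U"
proof -
  obtain V1 where "V1 \<in> \<U>" "V1 O V1 \<subseteq> U" using quasi_uniformity_half assms(1,3) by blast
  moreover obtain V where "V \<in> \<B>" "V \<subseteq> V1" using assms(2) \<open>V1 \<in> \<U>\<close> unfolding is_base_def by blast
  ultimately show ?thesis using relcomp_mono[of V V1 V V1] by blast
qed

lemma istopology_qu_topology:
  assumes qu: "quasi_uniformity \<U>"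
  shows "istopology (\<lambda>W. \<forall>x\<in>W. \<exists>U\<in>\<U>. U `` {x} \<subseteq> W)"
  unfolding istopology_def
proof (intro conjI allI impI ballI)
  fix S T x
  assume "\<forall>x\<in>S. \<exists>U\<in>\<U>. U `` {x} \<subseteq> S" "\<forall>x\<in>T. \<exists>U\<in>\<U>. U `` {x} \<subseteq> T" "x \<in> S \<inter> T"
  then obtain U1 U2 where "U1 \<in> \<U>" "U2 \<in> \<U>" "U1 `` {x} \<subseteq> S" "U2 `` {x} \<subseteq> T"
    by blast
  then show "\<exists>U\<in>\<U>. U `` {x} \<subseteq> S \<inter> T"
    using quasi_uniformity_Int[OF qu] by (intro bexI[of _ "U1 \<inter> U2"]) auto
qed (meson Union_upper subset_trans UnionE)

lemma openin_qu_topology: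
  assumes "quasi_uniformity \<U>"
  shows "openin (qu_topology \<U>) S \<longleftrightarrow> (\<forall>x\<in>S. \<exists>U\<in>\<U>. U `` {x} \<subseteq> S)"
  unfolding qu_topology_def using topology_inverse'[OF istopology_qu_topology[OF assms]] by simp

lemma topspace_qu_topology:
  assumes "quasi_uniformity \<U>"
  shows "topspace (qu_topology \<U>) = UNIV"
  using openin_subset[of "qu_topology \<U>" UNIV] quasi_uniformity_nonempty[OF assms]
  by (auto simp: openin_qu_topology[OF assms])

lemma closure_of_qu_topology_superset:
  "quasi_uniformity \<U> \<Longrightarrow> A \<subseteq> qu_topology \<U> closure_of A"
  by (simp add: closure_of_subset topspace_qu_topology)

section \<open>Premetrics on a quasi-uniform space\<close>

lemma closedin_right_continuous_le:
  assumes "quasi_uniformity \<U>" "right_continuous \<U> d"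
  shows "closedin (qu_topology \<U>) {y. d x y \<le> c}"
  using assms continuous_map_upper_lower_semicontinuous_le[of "qu_topology \<U>" "d x"]
  unfolding right_continuous_def by (simp add: topspace_qu_topology)

lemma closure_of_entourage_lt_subset:
  assumes "quasi_uniformity \<U>" "right_continuous \<U> d" "e' < e"
  shows "qu_topology \<U> closure_of (entourage_lt d e' `` {x}) \<subseteq> entourage_lt d e `` {x}"
proof -
  have "qu_topology \<U> closure_of (entourage_lt d e' `` {x}) \<subseteq> {y. d x y \<le> e'}"
    by (rule closure_of_minimal[OF _ closedin_right_continuous_le[OF assms(1,2)]])
      (auto simp: entourage_lt_def)
  then show ?thesis using assms(3) by (auto simp: entourage_lt_def)
qed

lemma openin_ball_uniform_quasi_pseudometric:
  assumes qu: "quasi_uniformity \<U>" and d: "quasi_pseudometric d" "uniform_premetric \<U> d"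
  shows "openin (qu_topology \<U>) {y. d x y < a}"
  unfolding openin_qu_topology[OF qu]
proof
  fix y assume "y \<in> {y. d x y < a}"
  then have "entourage_lt d (a - d x y) \<in> \<U>"
    using d(2) unfolding uniform_premetric_def by simp
  moreover have "entourage_lt d (a - d x y) `` {y} \<subseteq> {y. d x y < a}"
  proof
    fix y' assume "y' \<in> entourage_lt d (a - d x y) `` {y}"
    then have "d y y' < a - d x y" unfolding entourage_lt_def by simp
    moreover have "d x y' \<le> d x y + d y y'" using d(1) unfolding quasi_pseudometric_def by blast
    ultimately show "y' \<in> {y. d x y < a}" by simp
  qed
  ultimately show "\<exists>U\<in>\<U>. U `` {y} \<subseteq> {y. d x y < a}" by blast
qed

lemma closure_dist_le:
  assumes "0 < e" "x \<in> qu_topology \<U> closure_of (entourage_lt d e `` A)"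
  shows "closure_dist \<U> d A x \<le> e"
  unfolding closure_dist_def using assms by (intro cInf_lower bdd_belowI[of _ 0]) auto

lemma closure_dist_radius_witness:
  assumes qu: "quasi_uniformity \<U>" and d: "premetric d" and "a \<in> A"
  shows "d a x + 1 \<in> {e. 0 < e \<and> x \<in> qu_topology \<U> closure_of (entourage_lt d e `` A)}"
proof -
  have "x \<in> entourage_lt d (d a x + 1) `` A"
    using \<open>a \<in> A\<close> unfolding entourage_lt_def by (auto intro!: bexI[of _ a])
  then have "x \<in> qu_topology \<U> closure_of (entourage_lt d (d a x + 1) `` A)"
    using closure_of_qu_topology_superset[OF qu] by blast
  then show ?thesis using d unfolding premetric_def by (simp add: add_nonneg_pos)
qed

lemma closure_dist_nonneg:
  assumes "quasi_uniformity \<U>" "premetric d" "a \<in> A"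
  shows "0 \<le> closure_dist \<U> d A x"
  unfolding closure_dist_def using closure_dist_radius_witness[OF assms]
  by (intro cInf_greatest) auto

lemma closure_dist_lessE:
  assumes "quasi_uniformity \<U>" "premetric d" "a \<in> A" "closure_dist \<U> d A x < t"
  obtains e where "0 < e" "e < t" "x \<in> qu_topology \<U> closure_of (entourage_lt d e `` A)"
  using assms(4) that cInf_lessD closure_dist_radius_witness[OF assms(1-3)]
  unfolding closure_dist_def by (metis (lifting) empty_iff mem_Collect_eq)

lemma rotund_base_Image_closure_of:
  assumes qu: "quasi_uniformity \<U>" and B: "is_base \<U> \<B>" "rotund_base \<U> \<B>"
    and d: "quasi_pseudometric d" "uniform_premetric \<U> d" and "0 < \<delta>"
  obtains U where "U \<in> \<U>"
    "U `` (qu_topology \<U> closure_of (entourage_lt d e `` A))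
       \<subseteq> qu_topology \<U> closure_of (entourage_lt d (e + \<delta>) `` A)"
proof -
  obtain V where V: "V \<in> \<B>" "V O V \<subseteq> entourage_lt d \<delta>"
    using is_base_half[OF qu B(1)] d(2) \<open>0 < \<delta>\<close> unfolding uniform_premetric_def by blast
  have "(V O V) `` (entourage_lt d e `` A) \<subseteq> entourage_lt d (e + \<delta>) `` A"
  proof
    fix w assume "w \<in> (V O V) `` (entourage_lt d e `` A)"
    then obtain a v where "a \<in> A" "d a v < e" "d v w < \<delta>"
      using V(2) unfolding entourage_lt_def by blast
    moreover have "d a w \<le> d a v + d v w" using d(1) unfolding quasi_pseudometric_def by blast
    ultimately show "w \<in> entourage_lt d (e + \<delta>) `` A" unfolding entourage_lt_def by force
  qed
  then have "V `` (qu_topology \<U> closure_of (entourage_lt d e `` A))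
       \<subseteq> qu_topology \<U> closure_of (entourage_lt d (e + \<delta>) `` A)"
    using B(2) V(1) unfolding rotund_base_def by (meson closure_of_mono subset_trans)
  moreover have "V \<in> \<U>" using B(1) V(1) unfolding is_base_def by blast
  ultimately show ?thesis using that by blast
qed

lemma closedin_closure_dist_le:
  assumes qu: "quasi_uniformity \<U>" and pm: "premetric d" and "a \<in> A"
  shows "closedin (qu_topology \<U>) {x. closure_dist \<U> d A x \<le> t}"
proof (cases "t < 0")
  case True
  then have "\<not> closure_dist \<U> d A x \<le> t" for x
    using closure_dist_nonneg[OF assms, of x] by linarith
  then show ?thesis by simp
next
  case False
  let ?T = "\<lambda>e. qu_topology \<U> closure_of (entourage_lt d e `` A)"
  have mono: "?T e' \<subseteq> ?T e" if "e' \<le> e" for e e'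
    using that unfolding entourage_lt_def by (intro closure_of_mono Image_mono) auto
  have "{x. closure_dist \<U> d A x \<le> t} = (\<Inter>e\<in>{e. t < e}. ?T e)"
  proof (intro equalityI subsetI)
    fix x assume "x \<in> {x. closure_dist \<U> d A x \<le> t}"
    then have "closure_dist \<U> d A x \<le> t" by simp
    have "x \<in> ?T e" if "t < e" for e
    proof -
      obtain e' where "e' < e" "x \<in> ?T e'"
        using closure_dist_lessE[OF assms, of x e] \<open>closure_dist \<U> d A x \<le> t\<close> \<open>t < e\<close> by auto
      then show ?thesis using mono[of e' e] by auto
    qed
    then show "x \<in> (\<Inter>e\<in>{e. t < e}. ?T e)" by blast
  next
    fix x assume "x \<in> (\<Inter>e\<in>{e. t < e}. ?T e)"
    then have "closure_dist \<U> d A x \<le> t + \<epsilon>" if "0 < \<epsilon>" for \<epsilon>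
      using that False by (intro closure_dist_le) auto
    then show "x \<in> {x. closure_dist \<U> d A x \<le> t}" by (simp add: field_le_epsilon)
  qed
  moreover have "{e. t < e} \<noteq> {}" using gt_ex by blast
  ultimately show ?thesis by (auto intro: closedin_INT)
qed

lemma openin_closure_dist_less:
  assumes qu: "quasi_uniformity \<U>" and B: "is_base \<U> \<B>" "rotund_base \<U> \<B>"
    and d: "quasi_pseudometric d" "uniform_premetric \<U> d" and "a \<in> A"
  shows "openin (qu_topology \<U>) {x. closure_dist \<U> d A x < t}"
  unfolding openin_qu_topology[OF qu]
proof
  let ?g = "closure_dist \<U> d A"
  let ?T = "\<lambda>e. qu_topology \<U> closure_of (entourage_lt d e `` A)"
  have pm: "premetric d" using d(1) unfolding quasi_pseudometric_def by blast
  fix x assume "x \<in> {x. ?g x < t}"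
  then obtain e where e: "0 < e" "e < t" "x \<in> ?T e"
    using closure_dist_lessE[OF qu pm \<open>a \<in> A\<close>] by blast
  obtain U where U: "U \<in> \<U>" "U `` ?T e \<subseteq> ?T (e + (t - e) / 2)"
    using rotund_base_Image_closure_of[OF qu B d, of "(t - e) / 2"] e(2) by auto
  have "U `` {x} \<subseteq> {x. ?g x < t}"
  proof
    fix y assume "y \<in> U `` {x}"
    then have "?g y \<le> e + (t - e) / 2"
      using U(2) e by (intro closure_dist_le) (auto simp: add_pos_pos)
    then show "y \<in> {x. ?g x < t}" using e(2) by (simp add: field_simps)
  qed
  with U(1) show "\<exists>U\<in>\<U>. U `` {x} \<subseteq> {x. ?g x < t}" by blast
qed

lemma closure_dist_continuous_if_rotund_base:
  assumes qu: "quasi_uniformity \<U>" and B: "is_base \<U> \<B>" "rotund_base \<U> \<B>"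
    and d: "quasi_pseudometric d" "uniform_premetric \<U> d"
  shows "closure_dist_continuous \<U> d"
  unfolding closure_dist_continuous_def
proof (intro allI impI)
  fix A :: "'a set" assume "A \<noteq> {}"
  then obtain a where "a \<in> A" by blast
  moreover have "premetric d" using d(1) unfolding quasi_pseudometric_def by blast
  ultimately show "continuous_map (qu_topology \<U>) euclideanreal (closure_dist \<U> d A)"
    unfolding continuous_map_upper_lower_semicontinuous_lte topspace_qu_topology[OF qu]
    using closedin_closure_dist_le[OF qu] openin_closure_dist_less[OF qu B d] by simp
qed

section \<open>Dyadic entourages of a halving chain\<close>

lemma exists_inverse_two_power_less: "0 < (e::real) \<Longrightarrow> \<exists>n. 1 / 2 ^ n < e"
  using real_arch_pow_inv[of e "1/2"] by (auto simp: power_divide)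

lemma exists_dyadic_above:
  assumes "0 < r"
  obtains h :: nat where "0 < h" "r \<le> real h / 2 ^ N" "real h / 2 ^ N < r + 1 / 2 ^ N"
proof
  define h where "h = nat \<lceil>r * 2 ^ N\<rceil>"
  have "real h = of_int \<lceil>r * 2 ^ N\<rceil>" unfolding h_def using assms by simp
  then have "r * 2 ^ N \<le> real h" "real h < r * 2 ^ N + 1" by linarith+
  then show "r \<le> real h / 2 ^ N" "real h / 2 ^ N < r + 1 / 2 ^ N"
    by (simp_all add: field_simps)
  show "0 < h" unfolding h_def using assms by simp
qed

lemma exists_dyadic_between:
  assumes "0 \<le> t" "t < 1" "0 < e"
  obtains n h :: nat where "0 < h" "h < 2 ^ n" "t < real h / 2 ^ n" "real h / 2 ^ n < t + e"
proof -
  obtain n where n: "1 / 2 ^ n < min e (1 - t)"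
    using exists_inverse_two_power_less[of "min e (1 - t)"] assms by auto
  define h where "h = nat \<lfloor>t * 2 ^ n\<rfloor> + 1"
  have "real h = of_int \<lfloor>t * 2 ^ n\<rfloor> + 1" unfolding h_def using assms by simp
  then have "t * 2 ^ n < real h" "real h \<le> t * 2 ^ n + 1" by linarith+
  then have lo: "t < real h / 2 ^ n" and hi: "real h / 2 ^ n \<le> t + 1 / 2 ^ n"
    by (simp_all add: field_simps)
  then have "real h / 2 ^ n < 1" using n by linarith
  then have "h < 2 ^ n" by (simp add: divide_less_eq)
  moreover have "0 < h" unfolding h_def by simp
  ultimately show ?thesis using that lo hi n by auto
qed

text \<open>dyadic_entourage W n h is the composition, in increasing order of k, of those W k
  for which the k-th binary digit of h / 2^n is 1.\<close>

primrec dyadic_entourage :: "(nat \<Rightarrow> ('a \<times> 'a) set) \<Rightarrow> nat \<Rightarrow> nat \<Rightarrow> ('a \<times> 'a) set" where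
  "dyadic_entourage W 0 h = Id"
| "dyadic_entourage W (Suc n) h =
     (if even h then dyadic_entourage W n (h div 2)
      else dyadic_entourage W n (h div 2) O W (Suc n))"

locale halving_chain =
  fixes \<U> :: "('a \<times> 'a) set set" and \<B> :: "('a \<times> 'a) set set" and W :: "nat \<Rightarrow> ('a \<times> 'a) set"
  assumes quasi_uniformity: "quasi_uniformity \<U>" and base: "is_base \<U> \<B>"
    and multiplicative: "multiplicative \<B>"
    and W_in_base: "\<And>k. W k \<in> \<B>" and W_Suc_O_W_Suc: "\<And>k. W (Suc k) O W (Suc k) \<subseteq> W k"
begin

abbreviation F where "F \<equiv> dyadic_entourage W"

lemma W_in_uniformity: "W k \<in> \<U>"
  using base W_in_base unfolding is_base_def by blast

lemma Id_subset_W: "Id \<subseteq> W k"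
  using quasi_uniformity_Id_subset[OF quasi_uniformity W_in_uniformity] .

lemma Id_subset_dyadic_entourage: "Id \<subseteq> F n h"
proof (induction n arbitrary: h)
  case (Suc n)
  have "Id O Id \<subseteq> F n (h div 2) O W (Suc n)"
    using Suc Id_subset_W by (rule relcomp_mono)
  then show ?case using Suc by simp
qed simp

lemma dyadic_entourage_0: "F n 0 = Id"
  by (induction n) auto

lemma dyadic_entourage_rescale: "F (n + k) (h * 2 ^ k) = F n h"
  by (induction k) (auto simp: mult.assoc)

lemma dyadic_entourage_step: "h + 1 < 2 ^ n \<Longrightarrow> F n h O W n \<subseteq> F n (h + 1)"
proof (induction n arbitrary: h)
  case 0 then show ?case by simp
next
  case (Suc n)
  show ?case
  proof (cases "even h")
    case True then show ?thesis by simp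
  next
    case False
    then obtain g where h: "h = 2 * g + 1" by (metis oddE)
    have "F (Suc n) h O W (Suc n) = F n g O (W (Suc n) O W (Suc n))"
      using h by (simp add: O_assoc)
    also have "\<dots> \<subseteq> F n g O W n" using W_Suc_O_W_Suc by (intro relcomp_mono) auto
    also have "\<dots> \<subseteq> F n (g + 1)" using Suc h by simp
    also have "\<dots> = F (Suc n) (h + 1)" using h by simp
    finally show ?thesis .
  qed
qed

lemma dyadic_entourage_mono: "h \<le> h' \<Longrightarrow> h' < 2 ^ n \<Longrightarrow> F n h \<subseteq> F n h'"
proof (induction h' rule: dec_induct)
  case (step m)
  have "F n m = F n m O Id" by simp
  also have "\<dots> \<subseteq> F n m O W n" using Id_subset_W by (intro relcomp_mono) auto
  also have "\<dots> \<subseteq> F n (Suc m)" using dyadic_entourage_step[of m n] step.prems by simp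
  finally show ?case using step by simp
qed simp

lemma dyadic_entourage_le:
  assumes "h < 2 ^ n" "real h' / 2 ^ n' \<le> real h / 2 ^ n"
  shows "F n' h' \<subseteq> F n h"
proof -
  have "real (h' * 2 ^ n) \<le> real (h * 2 ^ n')" using assms(2) by (simp add: field_simps)
  then have "h' * 2 ^ n \<le> h * 2 ^ n'" by linarith
  moreover have "h * 2 ^ n' < 2 ^ (n' + n)" using assms(1) by (simp add: power_add)
  ultimately have "F (n' + n) (h' * 2 ^ n) \<subseteq> F (n' + n) (h * 2 ^ n')"
    by (rule dyadic_entourage_mono)
  then show ?thesis using dyadic_entourage_rescale by (metis add.commute)
qed

lemma dyadic_entourage_O_W_subset_W0: "h < 2 ^ n \<Longrightarrow> F n h O W n \<subseteq> W 0"
proof (induction n arbitrary: h)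
  case (Suc n)
  then have "h div 2 < 2 ^ n" by auto
  then have IH: "F n (h div 2) O W n \<subseteq> W 0" by (rule Suc.IH)
  have "F (Suc n) h O W (Suc n) \<subseteq> F n (h div 2) O (W (Suc n) O W (Suc n))"
    using Id_subset_W[of "Suc n"] by (auto simp: O_assoc)
  also have "\<dots> \<subseteq> F n (h div 2) O W n" using W_Suc_O_W_Suc by (intro relcomp_mono) auto
  finally show ?case using IH by blast
qed simp

lemma dyadic_entourage_subset_W0: "h < 2 ^ n \<Longrightarrow> F n h \<subseteq> W 0"
  using dyadic_entourage_O_W_subset_W0[of h n] Id_subset_W[of n] by auto

lemma dyadic_entourage_in_base: "0 < h \<Longrightarrow> h < 2 ^ n \<Longrightarrow> F n h \<in> \<B>"
proof (induction n arbitrary: h)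
  case (Suc n)
  then have "h div 2 < 2 ^ n" by auto
  then show ?case
    using Suc W_in_base multiplicative unfolding multiplicative_def
    by (cases "h div 2 = 0") (auto simp: dyadic_entourage_0)
qed simp

section \<open>The gauge of a halving chain\<close>

abbreviation cl where "cl A \<equiv> qu_topology \<U> closure_of A"

text \<open>Urysohn's construction along the chain, centred at z.\<close>

definition gauge_levels :: "'a \<Rightarrow> 'a \<Rightarrow> real set" where
  "gauge_levels z y =
     {real h / 2 ^ n | n h. 0 < h \<and> h < 2 ^ n \<and> y \<in> cl (F n h `` {z})} \<union> {1}"

definition gauge :: "'a \<Rightarrow> 'a \<Rightarrow> real" where
  "gauge z y = Inf (gauge_levels z y)"

lemma bdd_below_gauge_levels: "bdd_below (gauge_levels z y)"
  unfolding gauge_levels_def by (intro bdd_belowI[of _ 0]) auto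

lemma gauge_nonneg: "0 \<le> gauge z y"
  unfolding gauge_def gauge_levels_def by (intro cInf_greatest) auto

lemma gauge_le_1: "gauge z y \<le> 1"
  unfolding gauge_def using bdd_below_gauge_levels
  by (intro cInf_lower) (auto simp: gauge_levels_def)

lemma gauge_le:
  "0 < h \<Longrightarrow> h < 2 ^ n \<Longrightarrow> y \<in> cl (F n h `` {z}) \<Longrightarrow> gauge z y \<le> real h / 2 ^ n"
  unfolding gauge_def using bdd_below_gauge_levels
  by (intro cInf_lower) (auto simp: gauge_levels_def)

lemma gauge_lessE:
  assumes "gauge z y < t"
  obtains "1 < t"
  | n h where "0 < h" "h < 2 ^ n" "y \<in> cl (F n h `` {z})" "real h / 2 ^ n < t"
proof -
  obtain r where "r \<in> gauge_levels z y" "r < t"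
    using cInf_lessD[of "gauge_levels z y"] assms unfolding gauge_def gauge_levels_def by blast
  then show ?thesis using that unfolding gauge_levels_def by auto
qed

lemma gauge_self: "gauge z z = 0"
proof -
  have "gauge z z \<le> 1 / 2 ^ n" for n
  proof -
    have "z \<in> cl (F (Suc n) 1 `` {z})"
      using Id_subset_dyadic_entourage closure_of_qu_topology_superset[OF quasi_uniformity] by blast
    then have "gauge z z \<le> real 1 / 2 ^ Suc n"
      using one_less_power[of "2::nat" "Suc n"] by (intro gauge_le) auto
    then show ?thesis by (simp add: field_simps)
  qed
  then have "gauge z z \<le> e" if "0 < e" for e
    using exists_inverse_two_power_less[OF that] by (metis order.trans less_imp_le)
  then have "gauge z z \<le> 0" by (rule dense_ge)
  then show ?thesis using gauge_nonneg[of z z] by linarith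
qed

lemma gauge_less_1_imp_closure_W0: "gauge z y < 1 \<Longrightarrow> y \<in> cl (W 0 `` {z})"
proof (erule gauge_lessE)
  fix n h assume "h < 2 ^ n" "y \<in> cl (F n h `` {z})"
  moreover have "cl (F n h `` {z}) \<subseteq> cl (W 0 `` {z})"
    using dyadic_entourage_subset_W0[OF \<open>h < 2 ^ n\<close>] by (intro closure_of_mono Image_mono) auto
  ultimately show ?thesis by blast
qed simp

lemma gauge_W_Suc: "(z, y) \<in> W (Suc n) \<Longrightarrow> gauge z y \<le> 1 / 2 ^ n"
proof -
  assume "(z, y) \<in> W (Suc n)"
  then have "y \<in> F (Suc n) 1 `` {z}" by (simp add: dyadic_entourage_0)
  then have "y \<in> cl (F (Suc n) 1 `` {z})"
    using closure_of_qu_topology_superset[OF quasi_uniformity] by blast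
  then have "gauge z y \<le> real 1 / 2 ^ Suc n"
    using one_less_power[of "2::nat" "Suc n"] by (intro gauge_le) auto
  then show ?thesis by (simp add: field_simps)
qed

lemma premetric_gauge: "premetric gauge"
  unfolding premetric_def using gauge_nonneg gauge_self by blast

lemma uniform_premetric_gauge: "uniform_premetric \<U> gauge"
  unfolding uniform_premetric_def
proof (intro allI impI)
  fix e :: real assume "0 < e"
  then obtain n where n: "1 / 2 ^ n < e" using exists_inverse_two_power_less by blast
  have "W (Suc n) \<subseteq> entourage_lt gauge e"
    using gauge_W_Suc n unfolding entourage_lt_def by fastforce
  then show "entourage_lt gauge e \<in> \<U>"
    by (rule quasi_uniformity_mono[OF quasi_uniformity W_in_uniformity])
qed

lemma gauge_le_iff:
  assumes "0 \<le> t" "t < 1"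
  shows "gauge z y \<le> t \<longleftrightarrow>
    (\<forall>n h. 0 < h \<longrightarrow> h < 2 ^ n \<longrightarrow> t < real h / 2 ^ n \<longrightarrow> y \<in> cl (F n h `` {z}))"
proof safe
  fix n h assume y: "gauge z y \<le> t" and h: "0 < h" "h < (2::nat) ^ n" "t < real h / 2 ^ n"
  have "gauge z y < real h / 2 ^ n" using y h(3) by simp
  moreover have "\<not> 1 < real h / 2 ^ n" using h(2) by (simp add: divide_less_eq)
  ultimately obtain n' h' where "y \<in> cl (F n' h' `` {z})" "real h' / 2 ^ n' < real h / 2 ^ n"
    by (elim gauge_lessE) auto
  moreover have "cl (F n' h' `` {z}) \<subseteq> cl (F n h `` {z})"
    using dyadic_entourage_le[OF h(2) less_imp_le, OF calculation(2)]
    by (intro closure_of_mono Image_mono) auto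
  ultimately show "y \<in> cl (F n h `` {z})" by blast
next
  assume y: "\<forall>n h. 0 < h \<longrightarrow> h < 2 ^ n \<longrightarrow> t < real h / 2 ^ n \<longrightarrow> y \<in> cl (F n h `` {z})"
  have "gauge z y \<le> t + e" if "0 < e" for e
  proof -
    obtain n h where nh: "0 < h" "h < 2 ^ n" "t < real h / 2 ^ n" "real h / 2 ^ n < t + e"
      using exists_dyadic_between[OF assms \<open>0 < e\<close>] by blast
    then have "y \<in> cl (F n h `` {z})" using y by blast
    then show ?thesis using gauge_le[OF nh(1,2)] nh(4) by (meson less_imp_le order.trans)
  qed
  then show "gauge z y \<le> t" by (rule field_le_epsilon)
qed

lemma closedin_gauge_le: "closedin (qu_topology \<U>) {y. gauge z y \<le> t}"
proof (cases "t < 0 \<or> 1 \<le> t")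
  case False
  then have t: "0 \<le> t" "t < 1" by auto
  define K where "K = {cl (F n h `` {z}) | n h. 0 < h \<and> h < 2 ^ n \<and> t < real h / 2 ^ n}"
  have "{y. gauge z y \<le> t} = \<Inter>K"
  proof (intro equalityI subsetI InterI)
    fix y S assume "y \<in> {y. gauge z y \<le> t}" "S \<in> K"
    moreover obtain n h where "S = cl (F n h `` {z})" "0 < h" "h < 2 ^ n" "t < real h / 2 ^ n"
      using \<open>S \<in> K\<close> unfolding K_def by blast
    ultimately show "y \<in> S" using gauge_le_iff[OF t, of z y] by simp
  next
    fix y assume y: "y \<in> \<Inter>K"
    have "y \<in> cl (F n h `` {z})" if "0 < h" "h < 2 ^ n" "t < real h / 2 ^ n" for n h
      using that y unfolding K_def by blast
    then show "y \<in> {y. gauge z y \<le> t}" using gauge_le_iff[OF t, of z y] by simp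
  qed
  moreover have "K \<noteq> {}"
  proof -
    obtain n h where "0 < h" "h < 2 ^ n" "t < real h / 2 ^ n"
      using exists_dyadic_between[OF t zero_less_one] by blast
    then show ?thesis unfolding K_def by blast
  qed
  moreover have "closedin (qu_topology \<U>) S" if "S \<in> K" for S
    using that unfolding K_def by auto
  ultimately show ?thesis by (metis closedin_Inter)
next
  case True
  then consider "t < 0" | "1 \<le> t" by blast
  then show ?thesis
  proof cases
    case 1
    then have "\<not> gauge z y \<le> t" for y using gauge_nonneg[of z y] by linarith
    then show ?thesis by simp
  next
    case 2
    then have "gauge z y \<le> t" for y using gauge_le_1[of z y] by linarith
    then have "{y. gauge z y \<le> t} = topspace (qu_topology \<U>)"
      using topspace_qu_topology[OF quasi_uniformity] by simp
    then show ?thesis by simp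
  qed
qed

lemma dyadic_entourage_odd: "F (Suc n) (2 * h + 1) = F n h O W (Suc n)"
  by simp

lemma closure_of_dyadic_subset_interior:
  assumes "point_rotund_base \<U> \<B>" "0 < h" "h < 2 ^ n"
  shows "cl (F n h `` {z}) \<subseteq> qu_topology \<U> interior_of (cl (F (Suc n) (2 * h + 1) `` {z}))"
proof -
  have "cl (F n h `` {z}) \<subseteq> qu_topology \<U> interior_of (cl ((F n h O W (Suc n)) `` {z}))"
    using assms W_in_base dyadic_entourage_in_base unfolding point_rotund_base_def by blast
  then show ?thesis by simp
qed

lemma closure_of_dyadic_subset_interior_gauge_le:
  assumes "point_rotund_base \<U> \<B>" "0 < h" "h < 2 ^ n"
  shows "cl (F n h `` {z})
    \<subseteq> qu_topology \<U> interior_of {y. gauge z y \<le> real h / 2 ^ n + 1 / 2 ^ Suc (n + k)}"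
proof -
  define g where "g = h * 2 ^ k"
  have g: "0 < g" "g < 2 ^ (n + k)" "real g / 2 ^ (n + k) = real h / 2 ^ n"
    using assms(2,3) unfolding g_def by (simp_all add: power_add)
  have "cl (F (Suc (n + k)) (2 * g + 1) `` {z})
      \<subseteq> {y. gauge z y \<le> real (2 * g + 1) / 2 ^ Suc (n + k)}"
    using g(1,2) by (intro subsetI CollectI gauge_le) auto
  also have "real (2 * g + 1) / 2 ^ Suc (n + k) = real g / 2 ^ (n + k) + 1 / 2 ^ Suc (n + k)"
    by (simp add: field_simps)
  finally have "cl (F (Suc (n + k)) (2 * g + 1) `` {z})
      \<subseteq> {y. gauge z y \<le> real h / 2 ^ n + 1 / 2 ^ Suc (n + k)}"
    using g(3) by simp
  then have "qu_topology \<U> interior_of (cl (F (Suc (n + k)) (2 * g + 1) `` {z}))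
      \<subseteq> qu_topology \<U> interior_of {y. gauge z y \<le> real h / 2 ^ n + 1 / 2 ^ Suc (n + k)}"
    by (rule interior_of_mono)
  moreover have "F (n + k) g = F n h" unfolding g_def by (rule dyadic_entourage_rescale)
  ultimately show ?thesis using closure_of_dyadic_subset_interior[OF assms(1) g(1,2), of z] by simp
qed

lemma openin_gauge_less:
  assumes "point_rotund_base \<U> \<B>"
  shows "openin (qu_topology \<U>) {y. gauge z y < t}"
proof (subst openin_subopen, intro ballI)
  fix y assume "y \<in> {y. gauge z y < t}"
  then show "\<exists>T. openin (qu_topology \<U>) T \<and> y \<in> T \<and> T \<subseteq> {y. gauge z y < t}"
  proof (elim CollectE gauge_lessE)
    assume "1 < t"
    then have "{y. gauge z y < t} = topspace (qu_topology \<U>)"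
      using gauge_le_1 topspace_qu_topology[OF quasi_uniformity] by (auto intro: le_less_trans)
    moreover have "openin (qu_topology \<U>) (topspace (qu_topology \<U>))" by (rule openin_topspace)
    ultimately show ?thesis using topspace_qu_topology[OF quasi_uniformity] by blast
  next
    fix n h assume nh: "0 < h" "h < 2 ^ n" "y \<in> cl (F n h `` {z})" "real h / 2 ^ n < t"
    obtain k where k: "1 / 2 ^ k < t - real h / 2 ^ n"
      using exists_inverse_two_power_less[of "t - real h / 2 ^ n"] nh(4) by auto
    define S where "S = {y. gauge z y \<le> real h / 2 ^ n + 1 / 2 ^ Suc (n + k)}"
    have "1 / 2 ^ Suc (n + k) \<le> (1::real) / 2 ^ k"
      by (intro divide_left_mono power_increasing) auto
    then have "S \<subseteq> {y. gauge z y < t}" using k unfolding S_def by auto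
    moreover have "y \<in> qu_topology \<U> interior_of S"
      using closure_of_dyadic_subset_interior_gauge_le[OF assms nh(1,2)] nh(3) unfolding S_def by blast
    ultimately show ?thesis using interior_of_subset[of "qu_topology \<U>" S]
      by (intro exI[of _ "qu_topology \<U> interior_of S"]) auto
  qed
qed

lemma continuous_map_gauge:
  assumes "point_rotund_base \<U> \<B>"
  shows "continuous_map (qu_topology \<U>) euclideanreal (gauge z)"
  unfolding continuous_map_upper_lower_semicontinuous_lte topspace_qu_topology[OF quasi_uniformity]
  using openin_gauge_less[OF assms] closedin_gauge_le by simp

lemma closure_of_dyadic_W_Image:
  assumes "rotund_base \<U> \<B>" "x \<in> cl (F N h `` {z})" "(x, y) \<in> W (Suc (Suc N))"
  shows "y \<in> cl (F (Suc N) (2 * h + 1) `` {z})"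
proof -
  have "y \<in> W (Suc (Suc N)) `` cl (F N h `` {z})" using assms(2,3) by blast
  also have "\<dots> \<subseteq> cl ((W (Suc (Suc N)) O W (Suc (Suc N))) `` (F N h `` {z}))"
    using assms(1) W_in_base unfolding rotund_base_def by blast
  also have "\<dots> \<subseteq> cl (W (Suc N) `` (F N h `` {z}))"
    using W_Suc_O_W_Suc by (intro closure_of_mono Image_mono) auto
  also have "W (Suc N) `` (F N h `` {z}) = F (Suc N) (2 * h + 1) `` {z}"
    by (simp only: dyadic_entourage_odd relcomp_Image)
  finally show ?thesis .
qed

lemma gauge_W_Image_le_dyadic:
  assumes "rotund_base \<U> \<B>" "h < 2 ^ N" "x \<in> cl (F N h `` {z})" "(x, y) \<in> W (Suc (Suc N))"
  shows "gauge z y \<le> real h / 2 ^ N + 1 / 2 ^ Suc N"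
proof -
  have "y \<in> cl (F (Suc N) (2 * h + 1) `` {z})"
    using closure_of_dyadic_W_Image[OF assms(1,3,4)] .
  then have "gauge z y \<le> real (2 * h + 1) / 2 ^ Suc N"
    using assms(2) by (intro gauge_le) auto
  also have "\<dots> = real h / 2 ^ N + 1 / 2 ^ Suc N" by (simp add: field_simps)
  finally show ?thesis .
qed

lemma gauge_W_Image_le:
  assumes rotund: "rotund_base \<U> \<B>" and xy: "(x, y) \<in> W (Suc (Suc N))"
  shows "gauge z y \<le> gauge z x + 2 / 2 ^ N"
proof -
  have half: "1 / 2 ^ Suc N \<le> (1::real) / 2 ^ N" "2 / 2 ^ N = (1::real) / 2 ^ N + 1 / 2 ^ N"
    "0 \<le> (1::real) / 2 ^ N"
    by (simp_all add: field_simps)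
  have "gauge z y \<le> gauge z x + 2 / 2 ^ N + e" if "0 < e" for e
  proof -
    have "gauge z x < gauge z x + e" using \<open>0 < e\<close> by simp
    then show ?thesis
    proof (elim gauge_lessE)
      assume "1 < gauge z x + e"
      then show ?thesis using gauge_le_1[of z y] half by linarith
    next
      fix n' h' assume nh: "0 < h'" "h' < 2 ^ n'" "x \<in> cl (F n' h' `` {z})"
        "real h' / 2 ^ n' < gauge z x + e"
      obtain h where h: "real h' / 2 ^ n' \<le> real h / 2 ^ N"
        "real h / 2 ^ N < real h' / 2 ^ n' + 1 / 2 ^ N"
        using exists_dyadic_above[of "real h' / 2 ^ n'" N] nh(1) by auto
      show ?thesis
      proof (cases "h < 2 ^ N")
        case False
        then have "1 \<le> real h / 2 ^ N" by (simp add: le_divide_eq)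
        then show ?thesis using h(2) nh(4) gauge_le_1[of z y] half by linarith
      next
        case True
        have "cl (F n' h' `` {z}) \<subseteq> cl (F N h `` {z})"
          using dyadic_entourage_le[OF True h(1)] by (intro closure_of_mono Image_mono) auto
        then have "x \<in> cl (F N h `` {z})" using nh(3) by blast
        then have "gauge z y \<le> real h / 2 ^ N + 1 / 2 ^ Suc N"
          by (rule gauge_W_Image_le_dyadic[OF rotund True _ xy])
        then show ?thesis using h(2) nh(4) half by linarith
      qed
    qed
  qed
  then show ?thesis by (rule field_le_epsilon)
qed

definition gauge_metric :: "'a \<Rightarrow> 'a \<Rightarrow> real" where
  "gauge_metric x y = (SUP z. max 0 (gauge z y - gauge z x))"

lemma bdd_above_gauge_differences: "bdd_above (range (\<lambda>z. max 0 (gauge z y - gauge z x)))"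
proof (rule bdd_aboveI)
  fix r assume "r \<in> range (\<lambda>z. max 0 (gauge z y - gauge z x))"
  then obtain z where "r = max 0 (gauge z y - gauge z x)" by blast
  then show "r \<le> 1" using gauge_le_1[of z y] gauge_nonneg[of z x] by simp
qed

lemma gauge_difference_le_gauge_metric: "max 0 (gauge z y - gauge z x) \<le> gauge_metric x y"
  unfolding gauge_metric_def by (rule cSUP_upper[OF _ bdd_above_gauge_differences]) simp

lemma gauge_le_gauge_metric: "gauge x y \<le> gauge_metric x y"
  using gauge_difference_le_gauge_metric[of x y x] by (simp add: gauge_self)

lemma quasi_pseudometric_gauge_metric: "quasi_pseudometric gauge_metric"
  unfolding quasi_pseudometric_def premetric_def
proof (intro conjI allI)
  fix x y z
  show "0 \<le> gauge_metric x y"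
    using gauge_difference_le_gauge_metric[of x y x] by linarith
  show "gauge_metric x x = 0"
    unfolding gauge_metric_def by simp
  show "gauge_metric x z \<le> gauge_metric x y + gauge_metric y z"
    unfolding gauge_metric_def[of x z]
  proof (rule cSUP_least)
    fix w
    have "max 0 (gauge w z - gauge w x)
          \<le> max 0 (gauge w y - gauge w x) + max 0 (gauge w z - gauge w y)" by simp
    also have "\<dots> \<le> gauge_metric x y + gauge_metric y z"
      by (intro add_mono gauge_difference_le_gauge_metric)
    finally show "max 0 (gauge w z - gauge w x) \<le> gauge_metric x y + gauge_metric y z" .
  qed simp
qed

lemma gauge_metric_less_1_imp_closure_W0: "gauge_metric x y < 1 \<Longrightarrow> y \<in> cl (W 0 `` {x})"
  using gauge_le_gauge_metric[of x y] gauge_less_1_imp_closure_W0 by simp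

lemma closedin_gauge_metric_le: "closedin (qu_topology \<U>) {y. gauge_metric x y \<le> a}"
proof -
  have "{y. gauge_metric x y \<le> a} = (\<Inter>z. {y. max 0 (gauge z y - gauge z x) \<le> a})"
    unfolding gauge_metric_def using cSUP_le_iff[OF _ bdd_above_gauge_differences] by auto
  moreover have "closedin (qu_topology \<U>) {y. max 0 (gauge z y - gauge z x) \<le> a}" for z
  proof (cases "0 \<le> a")
    case True
    then have "{y. max 0 (gauge z y - gauge z x) \<le> a} = {y. gauge z y \<le> a + gauge z x}" by auto
    then show ?thesis using closedin_gauge_le by simp
  qed simp
  ultimately show ?thesis by (auto intro: closedin_INT)
qed

context
  assumes rotund: "rotund_base \<U> \<B>"
begin

lemma gauge_metric_W_le:
  assumes "(x, y) \<in> W (Suc (Suc N))"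
  shows "gauge_metric x y \<le> 2 / 2 ^ N"
  unfolding gauge_metric_def
proof (rule cSUP_least)
  fix z show "max 0 (gauge z y - gauge z x) \<le> 2 / 2 ^ N"
    using gauge_W_Image_le[OF rotund assms, of z] by simp
qed simp

lemma uniform_premetric_gauge_metric: "uniform_premetric \<U> gauge_metric"
  unfolding uniform_premetric_def
proof (intro allI impI)
  fix e :: real assume "0 < e"
  then obtain N where N: "1 / 2 ^ N < e / 2"
    using exists_inverse_two_power_less[of "e / 2"] by auto
  have "W (Suc (Suc N)) \<subseteq> entourage_lt gauge_metric e"
  proof safe
    fix x y assume "(x, y) \<in> W (Suc (Suc N))"
    then have "gauge_metric x y \<le> 2 / 2 ^ N" by (rule gauge_metric_W_le)
    moreover have "2 / 2 ^ N < e" using N by (simp add: field_simps)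
    ultimately show "(x, y) \<in> entourage_lt gauge_metric e"
      unfolding entourage_lt_def by simp
  qed
  then show "entourage_lt gauge_metric e \<in> \<U>"
    by (rule quasi_uniformity_mono[OF quasi_uniformity W_in_uniformity])
qed

lemma right_continuous_gauge_metric: "right_continuous \<U> gauge_metric"
  unfolding right_continuous_def continuous_map_upper_lower_semicontinuous_lte
    topspace_qu_topology[OF quasi_uniformity]
  using openin_ball_uniform_quasi_pseudometric[OF quasi_uniformity quasi_pseudometric_gauge_metric
      uniform_premetric_gauge_metric] closedin_gauge_metric_le
  by simp

end

end

section \<open>Regularity and generating families of premetrics\<close>

lemma halving_chain_exists:
  assumes qu: "quasi_uniformity \<U>" and base: "is_base \<U> \<B>" "multiplicative \<B>"
    and "W0 \<in> \<B>"
  obtains W where "halving_chain \<U> \<B> W" "W 0 = W0"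
proof -
  have "\<forall>V\<in>\<B>. \<exists>V'. V' \<in> \<B> \<and> V' O V' \<subseteq> V"
    using is_base_half[OF qu base(1)] base(1) unfolding is_base_def by blast
  then obtain s where s: "\<And>V. V \<in> \<B> \<Longrightarrow> s V \<in> \<B> \<and> s V O s V \<subseteq> V" by metis
  define W where "W k = (s ^^ k) W0" for k
  have W: "W k \<in> \<B>" for k
    by (induction k) (use \<open>W0 \<in> \<B>\<close> s in \<open>auto simp: W_def\<close>)
  have "halving_chain \<U> \<B> W"
    by unfold_locales (use qu base W s in \<open>auto simp: W_def\<close>)
  then show ?thesis using that unfolding W_def by simp
qed

lemma regular_halving_chain_exists:
  assumes qu: "quasi_uniformity \<U>" and reg: "uniformly_regular \<U>"
    and base: "is_base \<U> \<B>" "multiplicative \<B>" and "U \<in> \<U>"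
  obtains W where "halving_chain \<U> \<B> W" "\<And>x. qu_topology \<U> closure_of (W 0 `` {x}) \<subseteq> U `` {x}"
proof -
  obtain V where V: "V \<in> \<U>" "\<And>x. qu_topology \<U> closure_of (V `` {x}) \<subseteq> U `` {x}"
    using reg \<open>U \<in> \<U>\<close> unfolding uniformly_regular_def by blast
  obtain W0 where W0: "W0 \<in> \<B>" "W0 \<subseteq> V" using base(1) V(1) unfolding is_base_def by blast
  have "qu_topology \<U> closure_of (W0 `` {x}) \<subseteq> U `` {x}" for x
    using V(2)[of x] closure_of_mono[OF Image_mono[OF W0(2), of "{x}" "{x}"]] by blast
  with halving_chain_exists[OF qu base W0(1)] that show ?thesis by metis
qed

lemma uniformly_completely_regular_if_regular:
  assumes qu: "quasi_uniformity \<U>" and "point_rotund \<U>" "uniformly_regular \<U>"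
  shows "uniformly_completely_regular \<U>"
  unfolding uniformly_completely_regular_def
proof
  fix U assume "U \<in> \<U>"
  obtain \<B> where \<B>: "is_base \<U> \<B>" "multiplicative \<B>" "point_rotund_base \<U> \<B>"
    using assms(2) unfolding point_rotund_def by blast
  obtain W where chain: "halving_chain \<U> \<B> W"
    and W0: "\<And>x. qu_topology \<U> closure_of (W 0 `` {x}) \<subseteq> U `` {x}"
    using regular_halving_chain_exists[OF qu assms(3) \<B>(1,2) \<open>U \<in> \<U>\<close>] by blast
  interpret halving_chain \<U> \<B> W by (rule chain)
  have "{y. gauge x y < 1} \<subseteq> U `` {x}" for x
    using gauge_less_1_imp_closure_W0 W0 by blast
  moreover have "right_continuous \<U> gauge"
    unfolding right_continuous_def using continuous_map_gauge[OF \<B>(3)] by blast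
  moreover note premetric_gauge uniform_premetric_gauge gauge_le_1
  ultimately show "\<exists>d. premetric d \<and> (\<forall>x y. d x y \<le> 1) \<and> uniform_premetric \<U> d \<and>
      right_continuous \<U> d \<and> (\<forall>x. {y. d x y < 1} \<subseteq> U `` {x})"
    by blast
qed

lemma regular_gauge_metric_exists:
  assumes qu: "quasi_uniformity \<U>" and "rotund \<U>" "uniformly_regular \<U>" and "U \<in> \<U>"
  obtains d where "quasi_pseudometric d" "uniform_premetric \<U> d" "right_continuous \<U> d"
    "closure_dist_continuous \<U> d" "entourage_lt d 1 \<subseteq> U"
proof -
  obtain \<B> where \<B>: "is_base \<U> \<B>" "multiplicative \<B>" "rotund_base \<U> \<B>"
    using assms(2) unfolding rotund_def by blast
  obtain W where chain: "halving_chain \<U> \<B> W"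
    and W0: "\<And>x. qu_topology \<U> closure_of (W 0 `` {x}) \<subseteq> U `` {x}"
    using regular_halving_chain_exists[OF qu assms(3) \<B>(1,2) \<open>U \<in> \<U>\<close>] by blast
  interpret halving_chain \<U> \<B> W by (rule chain)
  have "entourage_lt gauge_metric 1 \<subseteq> U"
    using gauge_metric_less_1_imp_closure_W0 W0 unfolding entourage_lt_def by blast
  then show ?thesis
    using that quasi_pseudometric_gauge_metric uniform_premetric_gauge_metric[OF \<B>(3)]
      right_continuous_gauge_metric[OF \<B>(3)]
      closure_dist_continuous_if_rotund_base[OF qu \<B>(1,3) quasi_pseudometric_gauge_metric
        uniform_premetric_gauge_metric[OF \<B>(3)]]
    by blast
qed

lemma generatesI:
  assumes qu: "quasi_uniformity \<U>" and "\<forall>d\<in>\<D>. uniform_premetric \<U> d"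
    and "\<forall>U\<in>\<U>. \<exists>d\<in>\<D>. entourage_lt d 1 \<subseteq> U"
  shows "generates \<D> \<U>"
  unfolding generates_def is_base_def
proof (intro conjI ballI subsetI)
  fix S assume "S \<in> {\<Inter>\<F> | \<F>. finite \<F> \<and> \<F> \<subseteq> {entourage_lt d \<epsilon> | d \<epsilon>. d \<in> \<D> \<and> \<epsilon> > 0}}"
  then obtain \<F> where "S = \<Inter>\<F>" "finite \<F>" "\<F> \<subseteq> {entourage_lt d \<epsilon> | d \<epsilon>. d \<in> \<D> \<and> \<epsilon> > 0}"
    by blast
  moreover have "\<F> \<subseteq> \<U>"
    using calculation(3) assms(2) unfolding uniform_premetric_def by blast
  ultimately show "S \<in> \<U>" using quasi_uniformity_Inter[OF qu] by blast
next
  fix U assume "U \<in> \<U>"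
  then obtain d where d: "d \<in> \<D>" "entourage_lt d 1 \<subseteq> U" using assms(3) by blast
  then have "\<Inter>{entourage_lt d 1}
      \<in> {\<Inter>\<F> | \<F>. finite \<F> \<and> \<F> \<subseteq> {entourage_lt d \<epsilon> | d \<epsilon>. d \<in> \<D> \<and> \<epsilon> > 0}}"
    by (intro CollectI exI[of _ "{entourage_lt d 1}"]) (auto intro!: exI[of _ d] exI[of _ "1::real"])
  then show "\<exists>B\<in>{\<Inter>\<F> | \<F>. finite \<F> \<and> \<F> \<subseteq> {entourage_lt d \<epsilon> | d \<epsilon>. d \<in> \<D> \<and> \<epsilon> > 0}}.
      B \<subseteq> U"
    using d(2) by (intro bexI) auto
qed

lemma entourage_lt_in_if_generates:
  assumes "generates \<D> \<U>" "d \<in> \<D>" "0 < \<epsilon>"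
  shows "entourage_lt d \<epsilon> \<in> \<U>"
proof -
  have "\<Inter>{entourage_lt d \<epsilon>}
      \<in> {\<Inter>\<F> | \<F>. finite \<F> \<and> \<F> \<subseteq> {entourage_lt d \<epsilon> | d \<epsilon>. d \<in> \<D> \<and> \<epsilon> > 0}}"
    using assms(2,3) by (intro CollectI exI[of _ "{entourage_lt d \<epsilon>}"]) auto
  then show ?thesis using assms(1) unfolding generates_def is_base_def by auto
qed

lemma uniformly_regular_if_subbase:
  assumes qu: "quasi_uniformity \<U>" and subbase: "is_base \<U> {\<Inter>\<F> | \<F>. finite \<F> \<and> \<F> \<subseteq> \<E>}"
    and refine: "\<And>T. T \<in> \<E> \<Longrightarrow>
      \<exists>V\<in>\<U>. \<forall>x. qu_topology \<U> closure_of (V `` {x}) \<subseteq> T `` {x}"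
  shows "uniformly_regular \<U>"
  unfolding uniformly_regular_def
proof
  fix U assume "U \<in> \<U>"
  then obtain S where S: "S \<in> {\<Inter>\<F> | \<F>. finite \<F> \<and> \<F> \<subseteq> \<E>}" "S \<subseteq> U"
    using subbase unfolding is_base_def by (meson bexE)
  from S(1) obtain \<F> where \<F>: "S = \<Inter>\<F>" "finite \<F>" "\<F> \<subseteq> \<E>" by (elim CollectE exE conjE)
  have "\<forall>T\<in>\<F>. \<exists>V\<in>\<U>. \<forall>x. qu_topology \<U> closure_of (V `` {x}) \<subseteq> T `` {x}"
    using refine \<F>(3) by blast
  then obtain v where v: "\<And>T. T \<in> \<F> \<Longrightarrow> v T \<in> \<U> \<and>
      (\<forall>x. qu_topology \<U> closure_of (v T `` {x}) \<subseteq> T `` {x})"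
    by metis
  have "\<Inter>(v ` \<F>) \<in> \<U>" using v \<F>(2) by (intro quasi_uniformity_Inter[OF qu]) auto
  moreover have "qu_topology \<U> closure_of (\<Inter>(v ` \<F>) `` {x}) \<subseteq> U `` {x}" for x
  proof
    fix y assume y: "y \<in> qu_topology \<U> closure_of (\<Inter>(v ` \<F>) `` {x})"
    have "(x, y) \<in> T" if "T \<in> \<F>" for T
    proof -
      have "qu_topology \<U> closure_of (\<Inter>(v ` \<F>) `` {x}) \<subseteq> qu_topology \<U> closure_of (v T `` {x})"
        using that by (intro closure_of_mono Image_mono) auto
      then show ?thesis using y v[OF that] by blast
    qed
    then show "y \<in> U `` {x}" using \<F>(1) S(2) by blast
  qed
  ultimately show "\<exists>V\<in>\<U>. \<forall>x. qu_topology \<U> closure_of (V `` {x}) \<subseteq> U `` {x}" by blast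
qed

lemma uniformly_regular_if_generates:
  assumes qu: "quasi_uniformity \<U>" and "\<forall>d\<in>\<D>. right_continuous \<U> d" and gen: "generates \<D> \<U>"
  shows "uniformly_regular \<U>"
  using gen unfolding generates_def
proof (rule uniformly_regular_if_subbase[OF qu])
  fix T assume "T \<in> {entourage_lt d \<epsilon> | d \<epsilon>. d \<in> \<D> \<and> \<epsilon> > 0}"
  then obtain d \<epsilon> where T: "T = entourage_lt d \<epsilon>" and d: "d \<in> \<D>" "0 < \<epsilon>" by blast
  have "qu_topology \<U> closure_of (entourage_lt d (\<epsilon> / 2) `` {x}) \<subseteq> T `` {x}" for x
    using closure_of_entourage_lt_subset[OF qu, of d "\<epsilon> / 2" \<epsilon>] assms(2) d T by simp
  moreover have "entourage_lt d (\<epsilon> / 2) \<in> \<U>"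
    using entourage_lt_in_if_generates[OF gen d(1)] d(2) by simp
  ultimately show "\<exists>V\<in>\<U>. \<forall>x. qu_topology \<U> closure_of (V `` {x}) \<subseteq> T `` {x}" by blast
qed

lemma uniformly_regular_if_semiregular:
  assumes qu: "quasi_uniformity \<U>" and "point_rotund \<U>" "uniformly_semiregular \<U>"
  shows "uniformly_regular \<U>"
  unfolding uniformly_regular_def
proof
  fix U assume "U \<in> \<U>"
  obtain W where W: "W \<in> \<U>"
      "\<And>x. qu_topology \<U> interior_of (qu_topology \<U> closure_of (W `` {x})) \<subseteq> U `` {x}"
    using assms(3) \<open>U \<in> \<U>\<close> unfolding uniformly_semiregular_def by blast
  obtain \<B> where \<B>: "is_base \<U> \<B>" "point_rotund_base \<U> \<B>"
    using assms(2) unfolding point_rotund_def by blast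
  obtain V where V: "V \<in> \<B>" "V O V \<subseteq> W" using is_base_half[OF qu \<B>(1) W(1)] by blast
  have "qu_topology \<U> closure_of (V `` {x}) \<subseteq> U `` {x}" for x
  proof -
    have "qu_topology \<U> closure_of (V `` {x})
          \<subseteq> qu_topology \<U> interior_of (qu_topology \<U> closure_of ((V O V) `` {x}))"
      using \<B>(2) V(1) unfolding point_rotund_base_def by blast
    also have "\<dots> \<subseteq> qu_topology \<U> interior_of (qu_topology \<U> closure_of (W `` {x}))"
      using V(2) by (intro interior_of_mono closure_of_mono Image_mono) auto
    finally show ?thesis using W(2) by blast
  qed
  moreover have "V \<in> \<U>" using \<B>(1) V(1) unfolding is_base_def by blast
  ultimately show "\<exists>V\<in>\<U>. \<forall>x. qu_topology \<U> closure_of (V `` {x}) \<subseteq> U `` {x}" by blast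
qed

lemma uniformly_semiregular_if_regular: "uniformly_regular \<U> \<Longrightarrow> uniformly_semiregular \<U>"
  unfolding uniformly_regular_def uniformly_semiregular_def
  by (meson interior_of_subset subset_trans)

lemma uniformly_regular_if_completely_regular:
  assumes qu: "quasi_uniformity \<U>" and "uniformly_completely_regular \<U>"
  shows "uniformly_regular \<U>"
  unfolding uniformly_regular_def
proof
  fix U assume "U \<in> \<U>"
  then obtain d where d: "uniform_premetric \<U> d" "right_continuous \<U> d"
      "\<And>x. {y. d x y < 1} \<subseteq> U `` {x}"
    using assms(2) unfolding uniformly_completely_regular_def by blast
  have "qu_topology \<U> closure_of (entourage_lt d (1/2) `` {x}) \<subseteq> U `` {x}" for x
    using closure_of_entourage_lt_subset[OF qu d(2), of "1/2" 1 x] d(3)[of x]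
    unfolding entourage_lt_def by auto
  moreover have "entourage_lt d (1/2) \<in> \<U>" using d(1) unfolding uniform_premetric_def by simp
  ultimately show "\<exists>V\<in>\<U>. \<forall>x. qu_topology \<U> closure_of (V `` {x}) \<subseteq> U `` {x}" by blast
qed

lemma base_of_least_cardinality_exists:
  obtains \<B> where "is_base \<U> \<B>" "\<And>\<B>'. is_base \<U> \<B>' \<Longrightarrow> \<B> \<lesssim> \<B>'"
proof -
  let ?R = "{card_of \<B> | \<B>. is_base \<U> \<B>}"
  have "is_base \<U> \<U>" unfolding is_base_def by blast
  then have "?R \<noteq> {}" by blast
  moreover have "\<forall>r\<in>?R. Card_order r" using card_of_Card_order by blast
  ultimately obtain r where r: "r \<in> ?R" "\<forall>r'\<in>?R. (r, r') \<in> ordLeq"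
    using exists_minim_Card_order[of ?R] by blast
  then obtain \<B> where \<B>: "is_base \<U> \<B>" "r = card_of \<B>" by blast
  have "\<B> \<lesssim> \<B>'" if "is_base \<U> \<B>'" for \<B>'
  proof -
    have "(card_of \<B>, card_of \<B>') \<in> ordLeq" using r(2) \<B>(2) that by blast
    then show ?thesis unfolding lepoll_def using card_of_ordLeq by blast
  qed
  then show ?thesis using that \<B>(1) by blast
qed

lemma generated_by_regular_gauge_metrics:
  assumes qu: "quasi_uniformity \<U>" and "rotund \<U>" "uniformly_regular \<U>"
  shows "\<exists>\<D>. (\<forall>d\<in>\<D>. quasi_pseudometric d \<and> right_continuous \<U> d \<and> closure_dist_continuous \<U> d)
           \<and> generates \<D> \<U> \<and> card_le_chi \<D> \<U>"
proof -
  obtain \<B> where \<B>: "is_base \<U> \<B>" "\<And>\<B>'. is_base \<U> \<B>' \<Longrightarrow> \<B> \<lesssim> \<B>'"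
    using base_of_least_cardinality_exists by blast
  have "\<exists>d. quasi_pseudometric d \<and> uniform_premetric \<U> d \<and> right_continuous \<U> d \<and>
      closure_dist_continuous \<U> d \<and> entourage_lt d 1 \<subseteq> U" if "U \<in> \<B>" for U
  proof -
    have "U \<in> \<U>" using \<B>(1) that unfolding is_base_def by blast
    then obtain d where "quasi_pseudometric d" "uniform_premetric \<U> d" "right_continuous \<U> d"
        "closure_dist_continuous \<U> d" "entourage_lt d 1 \<subseteq> U"
      by (rule regular_gauge_metric_exists[OF qu assms(2,3)])
    then show ?thesis by blast
  qed
  then obtain \<delta> where \<delta>: "\<And>U. U \<in> \<B> \<Longrightarrow> quasi_pseudometric (\<delta> U) \<and> uniform_premetric \<U> (\<delta> U) \<and>
      right_continuous \<U> (\<delta> U) \<and> closure_dist_continuous \<U> (\<delta> U) \<and> entourage_lt (\<delta> U) 1 \<subseteq> U"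
    by metis
  have "generates (\<delta> ` \<B>) \<U>"
  proof (rule generatesI[OF qu])
    show "\<forall>d\<in>\<delta> ` \<B>. uniform_premetric \<U> d" using \<delta> by blast
    show "\<forall>U\<in>\<U>. \<exists>d\<in>\<delta> ` \<B>. entourage_lt d 1 \<subseteq> U"
    proof
      fix U assume "U \<in> \<U>"
      then obtain V where V: "V \<in> \<B>" "V \<subseteq> U" using \<B>(1) unfolding is_base_def by blast
      then have "entourage_lt (\<delta> V) 1 \<subseteq> U" using \<delta>[OF V(1)] by (meson subset_trans)
      then show "\<exists>d\<in>\<delta> ` \<B>. entourage_lt d 1 \<subseteq> U" using V(1) by blast
    qed
  qed
  moreover have "card_le_chi (\<delta> ` \<B>) \<U>"
    unfolding card_le_chi_def
  proof (intro allI impI)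
    fix \<B>' assume "is_base \<U> \<B>'"
    then show "\<delta> ` \<B> \<lesssim> \<B>'" using \<B>(2) image_lepoll lepoll_trans by metis
  qed
  moreover have "\<forall>d\<in>\<delta> ` \<B>. quasi_pseudometric d \<and> right_continuous \<U> d \<and> closure_dist_continuous \<U> d"
    using \<delta> by blast
  ultimately show ?thesis by blast
qed

lemma uniformly_regular_iff_generated_by_dist_continuous:
  assumes qu: "quasi_uniformity \<U>" and "rotund \<U>"
  shows "uniformly_regular \<U> \<longleftrightarrow>
      (\<exists>\<D>. (\<forall>d\<in>\<D>. quasi_pseudometric d \<and> right_continuous \<U> d \<and> closure_dist_continuous \<U> d)
           \<and> generates \<D> \<U> \<and> card_le_chi \<D> \<U>)"
proof
  assume "uniformly_regular \<U>"
  then show "\<exists>\<D>. (\<forall>d\<in>\<D>. quasi_pseudometric d \<and> right_continuous \<U> d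
      \<and> closure_dist_continuous \<U> d) \<and> generates \<D> \<U> \<and> card_le_chi \<D> \<U>"
    by (rule generated_by_regular_gauge_metrics[OF assms])
next
  assume "\<exists>\<D>. (\<forall>d\<in>\<D>. quasi_pseudometric d \<and> right_continuous \<U> d
      \<and> closure_dist_continuous \<U> d) \<and> generates \<D> \<U> \<and> card_le_chi \<D> \<U>"
  then obtain \<D> where "\<forall>d\<in>\<D>. right_continuous \<U> d" "generates \<D> \<U>" by blast
  then show "uniformly_regular \<U>" by (rule uniformly_regular_if_generates[OF qu])
qed

lemma uniformly_regular_iff_generated_by_right_continuous:
  assumes qu: "quasi_uniformity \<U>" and "rotund \<U>"
  shows "uniformly_regular \<U> \<longleftrightarrow>
      (\<exists>\<D>. (\<forall>d\<in>\<D>. premetric d \<and> right_continuous \<U> d) \<and> generates \<D> \<U>)"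
proof
  assume "uniformly_regular \<U>"
  then obtain \<D> where "\<forall>d\<in>\<D>. quasi_pseudometric d \<and> right_continuous \<U> d" "generates \<D> \<U>"
    using generated_by_regular_gauge_metrics[OF assms] by blast
  then show "\<exists>\<D>. (\<forall>d\<in>\<D>. premetric d \<and> right_continuous \<U> d) \<and> generates \<D> \<U>"
    unfolding quasi_pseudometric_def by blast
next
  assume "\<exists>\<D>. (\<forall>d\<in>\<D>. premetric d \<and> right_continuous \<U> d) \<and> generates \<D> \<U>"
  then obtain \<D> where "\<forall>d\<in>\<D>. right_continuous \<U> d" "generates \<D> \<U>" by blast
  then show "uniformly_regular \<U>" by (rule uniformly_regular_if_generates[OF qu])
qed

theorem theorem3p4:
  fixes \<U> :: "('a \<times> 'a) set set"
  assumes "quasi_uniformity \<U>" and "point_rotund \<U>"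
  shows "(uniformly_semiregular \<U> \<longleftrightarrow> uniformly_regular \<U>)
       \<and> (uniformly_regular \<U> \<longleftrightarrow> uniformly_completely_regular \<U>)
       \<and> (rotund \<U> \<longrightarrow>
            (uniformly_regular \<U> \<longleftrightarrow>
               (\<exists>\<D>. (\<forall>d\<in>\<D>. premetric d \<and> right_continuous \<U> d) \<and> generates \<D> \<U>))
          \<and> (uniformly_regular \<U> \<longleftrightarrow>
               (\<exists>\<D>. (\<forall>d\<in>\<D>. quasi_pseudometric d \<and> right_continuous \<U> d
                          \<and> closure_dist_continuous \<U> d)
                    \<and> generates \<D> \<U> \<and> card_le_chi \<D> \<U>)))"
proof (intro conjI impI)
  show "uniformly_semiregular \<U> \<longleftrightarrow> uniformly_regular \<U>"
    using uniformly_semiregular_if_regular uniformly_regular_if_semiregular[OF assms] by blast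
  show "uniformly_regular \<U> \<longleftrightarrow> uniformly_completely_regular \<U>"
    using uniformly_completely_regular_if_regular[OF assms]
      uniformly_regular_if_completely_regular[OF assms(1)] by blast
qed (fact uniformly_regular_iff_generated_by_right_continuous[OF assms(1)]
    uniformly_regular_iff_generated_by_dist_continuous[OF assms(1)])+

end
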